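(* Let $n\ge 2$ and $w\in S_n$, and let $P=[C_1,\dots,C_k]$ be a path in the conflated expression graph $\Gamma_w$. If $\tilde p$ and $\tilde p'$ are two lifts of $P$ to $Rex(w)$, then $f(\tilde p)=f(\tilde p')$. In other words, the path morphism $f(P):=f(\tilde p)$ of a path in $\Gamma_w$ is well defined.
   Context: $S_n$ is the symmetric group with simple reflections $s_i=(i\ i+1)$, $1\le i\le n-1$; in words we write $i$ for $s_i$. A reduced expression of $w$ is a word $i_1\cdots i_k$ with $w=s_{i_1}\cdots s_{i_k}$ and $k$ minimal. The rex graph $Rex(w)$ has as vertices the reduced expressions of $w$, with an edge between two reduced expressions that differ by a single braid relation applied to consecutive letters: either $i(i+1)i\leftrightarrow (i+1)i(i+1)$ (an adjacent edge) or $ij\leftrightarrow ji$ with $|i-j|\ge 2$ (a distant edge). Let $R=\mathbb{R}[x_1,\dots,x_n]$, graded with $\deg x_i=2$, with $s_i$ acting by swapping $x_i$ and $x_{i+1}$; $R^{s}$ denotes the $s$-invariants, $B_i=R\otimes_{R^{s_i}}R(1)$, and for a word $i_1\cdots i_k$ the Bott–Samelson bimodule is $B_{i_1}\otimes_R\cdots\otimes_R B_{i_k}$. For $i\ne j$ let $m_{ij}\in\{2,3\}$ be the order of $s_is_j$ and let $f_{ij}:B_iB_jB_i\cdots\to B_jB_iB_j\cdots$ (each with $m_{ij}$ factors) be the unique degree-$0$ $R$-bimodule morphism sending $1\otimes\cdots\otimes 1$ to $1\otimes\cdots\otimes1$. Traversing an edge from $\underline u$ to $\underline v$, where $\underline v$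 is obtained from $\underline u$ by replacing a consecutive subword $iji\cdots$ ($m_{ij}$ letters) by $jij\cdots$, gives the morphism $\mathrm{Id}\otimes f_{ij}\otimes\mathrm{Id}:B_{\underline u}\to B_{\underline v}$. For a path $p$ (a sequence of vertices, consecutive ones joined by an edge) the path morphism $f(p)$ is the composite of the edge morphisms along $p$ (the identity for a one-vertex path). A cloud is an equivalence class of vertices of $Rex(w)$ under the equivalence relation generated by distant edges. The conflated expression graph $\Gamma_w$ has the clouds as vertices, with an edge between two distinct clouds whenever some adjacent edge of $Rex(w)$ joins an element of one to an element of the other; for each such pair of clouds one adjacent edge joining them is fixed (the representative edge), and each cloud $C$ has a fixed representative element $\mathrm{rep}(C)$ (by convention the lexicographically smallest). A lift of a path $P=[C_1,\dots,C_k]$ in $\Gamma_w$ is a path in $Rex(w)$ that starts at $\mathrm{rep}(C_1)$, ends at $\mathrm{rep}(C_k)$, whose adjacent edges are, in order, the representative edges for $\{C_1,C_2\},\dots,\{C_{k-1},C_k\}$, and all of whose other edges are distant edges. *)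

theory Defs
  imports Complex_Main "HOL-Combinatorics.Permutations" "HOL-Combinatorics.Transposition"
begin

type_synonym word = "nat list"

definition sref :: "nat \<Rightarrow> nat \<Rightarrow> nat" where
  "sref i = transpose i (Suc i)"

definition prod_word :: "word \<Rightarrow> (nat \<Rightarrow> nat)" where
  "prod_word u = foldr (\<lambda>i f. sref i \<circ> f) u id"

definition is_word :: "nat \<Rightarrow> word \<Rightarrow> bool" where
  "is_word n u \<longleftrightarrow> set u \<subseteq> {1..<n}"

definition reduced :: "nat \<Rightarrow> (nat \<Rightarrow> nat) \<Rightarrow> word \<Rightarrow> bool" where
  "reduced n w u \<longleftrightarrow> is_word n u \<and> prod_word u = w \<and>
     (\<forall>u'. is_word n u' \<and> prod_word u' = w \<longrightarrow> length u \<le> length u')"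

definition Rex :: "nat \<Rightarrow> (nat \<Rightarrow> nat) \<Rightarrow> word set" where
  "Rex n w = {u. reduced n w u}"

definition mord :: "nat \<Rightarrow> nat \<Rightarrow> nat" where
  "mord i j = (if i + 2 \<le> j \<or> j + 2 \<le> i then 2 else 3)"

definition bword :: "nat \<Rightarrow> nat \<Rightarrow> nat \<Rightarrow> word" where
  "bword i j m = map (\<lambda>t. if even t then i else j) [0..<m]"

definition braid_move :: "nat \<Rightarrow> word \<Rightarrow> word \<Rightarrow> bool" where
  "braid_move m u v \<longleftrightarrow> (\<exists>a b i j. i \<noteq> j \<and> mord i j = m \<and>
      u = a @ bword i j m @ b \<and> v = a @ bword j i m @ b)"

definition adjacent_edge :: "nat \<Rightarrow> (nat \<Rightarrow> nat) \<Rightarrow> word \<Rightarrow> word \<Rightarrow> bool" where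
  "adjacent_edge n w u v \<longleftrightarrow> u \<in> Rex n w \<and> v \<in> Rex n w \<and> braid_move 3 u v"

definition distant_edge :: "nat \<Rightarrow> (nat \<Rightarrow> nat) \<Rightarrow> word \<Rightarrow> word \<Rightarrow> bool" where
  "distant_edge n w u v \<longleftrightarrow> u \<in> Rex n w \<and> v \<in> Rex n w \<and> braid_move 2 u v"

definition rex_edge :: "nat \<Rightarrow> (nat \<Rightarrow> nat) \<Rightarrow> word \<Rightarrow> word \<Rightarrow> bool" where
  "rex_edge n w u v \<longleftrightarrow> adjacent_edge n w u v \<or> distant_edge n w u v"

definition rex_path :: "nat \<Rightarrow> (nat \<Rightarrow> nat) \<Rightarrow> word list \<Rightarrow> bool" where
  "rex_path n w ps \<longleftrightarrow> ps \<noteq> [] \<and> set ps \<subseteq> Rex n w \<and>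
     (\<forall>k. Suc k < length ps \<longrightarrow> rex_edge n w (ps ! k) (ps ! Suc k))"

definition cloud :: "nat \<Rightarrow> (nat \<Rightarrow> nat) \<Rightarrow> word \<Rightarrow> word set" where
  "cloud n w u = {v. (equivclp (distant_edge n w)) u v}"

definition clouds :: "nat \<Rightarrow> (nat \<Rightarrow> nat) \<Rightarrow> word set set" where
  "clouds n w = cloud n w ` Rex n w"

definition gamma_edge :: "nat \<Rightarrow> (nat \<Rightarrow> nat) \<Rightarrow> word set \<Rightarrow> word set \<Rightarrow> bool" where
  "gamma_edge n w C D \<longleftrightarrow> C \<in> clouds n w \<and> D \<in> clouds n w \<and> C \<noteq> D \<and>
     (\<exists>u\<in>C. \<exists>v\<in>D. adjacent_edge n w u v)"

definition gamma_path :: "nat \<Rightarrow> (nat \<Rightarrow> nat) \<Rightarrow> word set list \<Rightarrow> bool" where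
  "gamma_path n w Cs \<longleftrightarrow> Cs \<noteq> [] \<and> set Cs \<subseteq> clouds n w \<and>
     (\<forall>k. Suc k < length Cs \<longrightarrow> gamma_edge n w (Cs ! k) (Cs ! Suc k))"

definition rep :: "word set \<Rightarrow> word" where
  "rep C = (THE u. u \<in> C \<and> (\<forall>v\<in>C. v \<noteq> u \<longrightarrow> (u, v) \<in> lexord {(a, b). a < b}))"

definition rep_edges :: "nat \<Rightarrow> (nat \<Rightarrow> nat) \<Rightarrow> (word set \<Rightarrow> word set \<Rightarrow> word set) \<Rightarrow> bool" where
  "rep_edges n w E \<longleftrightarrow> (\<forall>C D. gamma_edge n w C D \<longrightarrow>
      E C D = E D C \<and> (\<exists>u v. u \<in> C \<and> v \<in> D \<and> adjacent_edge n w u v \<and> E C D = {u, v}))"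

definition lift :: "nat \<Rightarrow> (nat \<Rightarrow> nat) \<Rightarrow> (word set \<Rightarrow> word set \<Rightarrow> word set) \<Rightarrow>
    word set list \<Rightarrow> word list \<Rightarrow> bool" where
  "lift n w E Cs ps \<longleftrightarrow> rex_path n w ps \<and> hd ps = rep (hd Cs) \<and> last ps = rep (last Cs) \<and>
     map (\<lambda>(a, b). {a, b}) (filter (\<lambda>(a, b). adjacent_edge n w a b) (zip ps (tl ps)))
       = map (\<lambda>(C, D). E C D) (zip Cs (tl Cs))"

text \<open>Polynomials over the reals are modelled by polynomial functions (faithful since the
  reals are infinite). Variable (j, a) is the variable x_a in the j-th tensor factor.\<close>

type_synonym pt = "nat \<times> nat \<Rightarrow> real"
type_synonym pf = "pt \<Rightarrow> real"

inductive_set polys :: "(nat \<times> nat) set \<Rightarrow> pf set" for V where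
  pconst: "(\<lambda>_. c) \<in> polys V"
| pvar: "v \<in> V \<Longrightarrow> (\<lambda>x. x v) \<in> polys V"
| padd: "p \<in> polys V \<Longrightarrow> q \<in> polys V \<Longrightarrow> (\<lambda>x. p x + q x) \<in> polys V"
| pmul: "p \<in> polys V \<Longrightarrow> q \<in> polys V \<Longrightarrow> (\<lambda>x. p x * q x) \<in> polys V"

definition slots :: "nat \<Rightarrow> nat \<Rightarrow> (nat \<times> nat) set" where
  "slots n k = {(j, a). j \<le> k \<and> 1 \<le> a \<and> a \<le> n}"

text \<open>the polynomial ring R = real[x_1..x_n], as polynomials in the factor-0 variables\<close>
definition Rpoly :: "nat \<Rightarrow> pf set" where
  "Rpoly n = polys (slots n 0)"

text \<open>R tensor ... tensor R (k+1 factors) over the reals\<close>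
definition Apoly :: "nat \<Rightarrow> nat \<Rightarrow> pf set" where
  "Apoly n k = polys (slots n k)"

definition place :: "nat \<Rightarrow> pf \<Rightarrow> pf" where
  "place j g = (\<lambda>x. g (\<lambda>(i, a). x (j, a)))"

definition shiftp :: "nat \<Rightarrow> pf \<Rightarrow> pf" where
  "shiftp s p = (\<lambda>x. p (\<lambda>(j, a). x (j + s, a)))"

definition sact :: "nat \<Rightarrow> pf \<Rightarrow> pf" where
  "sact i g = (\<lambda>x. g (\<lambda>(j, a). x (j, sref i a)))"

inductive_set gen_ideal :: "(nat \<times> nat) set \<Rightarrow> pf set \<Rightarrow> pf set" for V G where
  igen: "g \<in> G \<Longrightarrow> g \<in> gen_ideal V G"
| izero: "(\<lambda>_. 0) \<in> gen_ideal V G"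
| iadd: "p \<in> gen_ideal V G \<Longrightarrow> q \<in> gen_ideal V G \<Longrightarrow> (\<lambda>x. p x + q x) \<in> gen_ideal V G"
| imul: "r \<in> polys V \<Longrightarrow> p \<in> gen_ideal V G \<Longrightarrow> (\<lambda>x. r x * p x) \<in> gen_ideal V G"

text \<open>B_u = R tensor_{R^{s_{u_1}}} R tensor ... tensor_{R^{s_{u_k}}} R is Apoly n k modulo
  the ideal generated by g(factor j-1) - g(factor j), g invariant under s_{u_j}\<close>
definition BSideal :: "nat \<Rightarrow> word \<Rightarrow> pf set" where
  "BSideal n u = gen_ideal (slots n (length u))
     {(\<lambda>x. place (j - 1) g x - place j g x) | j g.
        1 \<le> j \<and> j \<le> length u \<and> g \<in> Rpoly n \<and> sact (u ! (j - 1)) g = g}"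

text \<open>equality in B_u of the classes of p and q\<close>
definition modeq :: "nat \<Rightarrow> word \<Rightarrow> pf \<Rightarrow> pf \<Rightarrow> bool" where
  "modeq n u p q \<longleftrightarrow> (\<lambda>x. p x - q x) \<in> BSideal n u"

definition homog :: "nat \<Rightarrow> pf \<Rightarrow> bool" where
  "homog d p \<longleftrightarrow> (\<forall>t x. p (\<lambda>v. t * x v) = t ^ d * p x)"

text \<open>F (acting on representatives) induces an R-bimodule morphism B_u \<rightarrow> B_v\<close>
definition bimor :: "nat \<Rightarrow> word \<Rightarrow> word \<Rightarrow> (pf \<Rightarrow> pf) \<Rightarrow> bool" where
  "bimor n u v F \<longleftrightarrow>
     (\<forall>p\<in>Apoly n (length u). F p \<in> Apoly n (length v)) \<and>
     (\<forall>p\<in>Apoly n (length u). \<forall>q\<in>Apoly n (length u). modeq n u p q \<longrightarrow> modeq n v (F p) (F q)) \<and>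
     (\<forall>p\<in>Apoly n (length u). \<forall>q\<in>Apoly n (length u).
         modeq n v (F (\<lambda>x. p x + q x)) (\<lambda>x. F p x + F q x)) \<and>
     (\<forall>g\<in>Rpoly n. \<forall>p\<in>Apoly n (length u).
         modeq n v (F (\<lambda>x. place 0 g x * p x)) (\<lambda>x. place 0 g x * F p x)) \<and>
     (\<forall>g\<in>Rpoly n. \<forall>p\<in>Apoly n (length u).
         modeq n v (F (\<lambda>x. place (length u) g x * p x)) (\<lambda>x. place (length v) g x * F p x))"

text \<open>degree 0 (for words of equal length, where the grading shifts agree):
  homogeneous elements of degree d are sent to homogeneous elements of degree d\<close>
definition deg0 :: "nat \<Rightarrow> word \<Rightarrow> word \<Rightarrow> (pf \<Rightarrow> pf) \<Rightarrow> bool" where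
  "deg0 n u v F \<longleftrightarrow> (\<forall>d. \<forall>p\<in>Apoly n (length u). homog d p \<longrightarrow>
      (\<exists>q\<in>Apoly n (length v). homog d q \<and> modeq n v (F p) q))"

text \<open>f is (a representative of) the morphism f_{ij}: B_i B_j B_i ... \<rightarrow> B_j B_i B_j ...,
  the degree-0 bimodule morphism sending 1 \<otimes> ... \<otimes> 1 to 1 \<otimes> ... \<otimes> 1\<close>
definition is_fij :: "nat \<Rightarrow> nat \<Rightarrow> nat \<Rightarrow> (pf \<Rightarrow> pf) \<Rightarrow> bool" where
  "is_fij n i j f \<longleftrightarrow>
     (let u = bword i j (mord i j); v = bword j i (mord i j) in
        bimor n u v f \<and> deg0 n u v f \<and> modeq n v (f (\<lambda>_. 1)) (\<lambda>_. 1))"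

text \<open>F is (a representative of) Id \<otimes> f_{ij} \<otimes> Id : B_u \<rightarrow> B_v where
  u = a @ (i j i ...) @ b and v = a @ (j i j ...) @ b: a bimodule morphism which is linear
  over the outer tensor factors (those of B_a and B_b) and agrees with f_{ij} on the
  middle tensor factors.\<close>
definition edge_mor :: "nat \<Rightarrow> word \<Rightarrow> word \<Rightarrow> (pf \<Rightarrow> pf) \<Rightarrow> bool" where
  "edge_mor n u v F \<longleftrightarrow> (\<exists>a b i j. i \<noteq> j \<and>
     u = a @ bword i j (mord i j) @ b \<and> v = a @ bword j i (mord i j) @ b \<and>
     bimor n u v F \<and>
     (\<forall>g\<in>polys {(s, c) \<in> slots n (length u). s \<le> length a \<or> length a + mord i j \<le> s}.
        \<forall>p\<in>Apoly n (length u). modeq n v (F (\<lambda>x. g x * p x)) (\<lambda>x. g x * F p x)) \<and>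
     (\<exists>f. is_fij n i j f \<and>
        (\<forall>p\<in>Apoly n (mord i j). modeq n v (F (shiftp (length a) p)) (shiftp (length a) (f p)))))"

fun path_mor :: "(word \<Rightarrow> word \<Rightarrow> (pf \<Rightarrow> pf)) \<Rightarrow> word list \<Rightarrow> (pf \<Rightarrow> pf)" where
  "path_mor Fm [] = id"
| "path_mor Fm [u] = id"
| "path_mor Fm (u # v # ps) = path_mor Fm (v # ps) \<circ> Fm u v"

end

theory Submission
  imports Defs
begin

(* A distant move B_i B_j -> B_j B_i (|i - j| >= 2) fixes 1 and is linear over the outer
   tensor factors, so on a representative it moves each variable x_c of the middle factor
   across whichever of s_i, s_j fixes it. Hence every composite of distant moves from u to v
   is a substitution morphism: it moves each variable x_c to a tensor factor preceded by as
   many letters not fixing x_c as before. As x_c slides across every tensor sign of a B_i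
   fixing it, all such substitutions agree in B_v, so composites of distant moves are
   canonical. Two lifts of a path in Gamma_w differ only by distant moves inside clouds and
   traverse the same representative edges in the same order; the multiset of letters,
   preserved by distant moves and changed by adjacent ones, shows that they cross each such
   edge in the same direction, and induction along the path finishes the proof. *)

section \<open>Moving variables between tensor factors\<close>

text \<open>\<open>\<lambda>x. q (reslot \<tau> x)\<close> is \<open>q\<close> with the variable \<open>x\<^sub>c\<close> of tensor factor \<open>s\<close>
  replaced by the variable \<open>x\<^sub>c\<close> of tensor factor \<open>\<tau> (s, c)\<close>.\<close>
definition reslot :: "(nat \<times> nat \<Rightarrow> nat) \<Rightarrow> pt \<Rightarrow> pt" where
  "reslot \<tau> x = (\<lambda>v. x (\<tau> v, snd v))"

lemma polys_reslot:
  assumes "q \<in> polys V" and "\<And>v. v \<in> V \<Longrightarrow> (\<tau> v, snd v) \<in> W"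
  shows "(\<lambda>x. q (reslot \<tau> x)) \<in> polys W"
  using assms
proof (induction rule: polys.induct)
  case (pvar v)
  then show ?case by (simp add: reslot_def polys.pvar)
qed (auto intro: polys.intros)

lemma polys_mono: "q \<in> polys V \<Longrightarrow> V \<subseteq> W \<Longrightarrow> q \<in> polys W"
  by (induction rule: polys.induct) (auto intro: polys.intros)

lemma modeq_refl: "modeq n z p p"
  unfolding modeq_def BSideal_def using gen_ideal.izero by simp

lemma modeq_sym:
  assumes "modeq n z p q" shows "modeq n z q p"
proof -
  have "(\<lambda>x. - 1 * (p x - q x)) \<in> BSideal n z"
    using assms gen_ideal.imul[OF polys.pconst] unfolding modeq_def BSideal_def by blast
  then show ?thesis unfolding modeq_def by simp
qed

lemma modeq_trans: "modeq n z p q \<Longrightarrow> modeq n z q r \<Longrightarrow> modeq n z p r"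
  unfolding modeq_def BSideal_def by (drule (1) gen_ideal.iadd) simp

lemma modeq_add:
  "modeq n z p p' \<Longrightarrow> modeq n z q q' \<Longrightarrow> modeq n z (\<lambda>x. p x + q x) (\<lambda>x. p' x + q' x)"
  unfolding modeq_def BSideal_def by (drule (1) gen_ideal.iadd) (simp add: algebra_simps)

lemma modeq_mult_left:
  "r \<in> polys (slots n (length z)) \<Longrightarrow> modeq n z p q \<Longrightarrow>
     modeq n z (\<lambda>x. r x * p x) (\<lambda>x. r x * q x)"
  unfolding modeq_def BSideal_def by (drule (1) gen_ideal.imul) (simp add: right_diff_distrib)

lemma modeq_mult:
  assumes "modeq n z p p'" "modeq n z q q'"
    and "p \<in> polys (slots n (length z))" "q' \<in> polys (slots n (length z))"
  shows "modeq n z (\<lambda>x. p x * q x) (\<lambda>x. p' x * q' x)"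
proof -
  have "modeq n z (\<lambda>x. p x * q x) (\<lambda>x. p x * q' x)"
    using modeq_mult_left[OF assms(3,2)] .
  moreover have "modeq n z (\<lambda>x. q' x * p x) (\<lambda>x. q' x * p' x)"
    using modeq_mult_left[OF assms(4,1)] .
  ultimately show ?thesis by (simp add: modeq_trans mult.commute)
qed

definition moving_count :: "word \<Rightarrow> nat \<Rightarrow> nat \<Rightarrow> nat" where
  "moving_count z t c = length (filter (\<lambda>i. i = c \<or> Suc i = c) (take t z))"

lemma moving_count_Suc:
  "t < length z \<Longrightarrow>
     moving_count z (Suc t) c = moving_count z t c + (if z ! t = c \<or> Suc (z ! t) = c then 1 else 0)"
  by (simp add: moving_count_def take_Suc_conv_app_nth)

lemma moving_count_mono: "t \<le> t' \<Longrightarrow> moving_count z t c \<le> moving_count z t' c"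
  by (auto simp: moving_count_def le_iff_add take_add)

lemma moving_count_append:
  "moving_count (xs @ ys) t c = moving_count xs t c + moving_count ys (t - length xs) c"
  by (simp add: moving_count_def take_append)

lemma slot_var_modeq_Suc:
  assumes "t < length z" "\<not> (z ! t = c \<or> Suc (z ! t) = c)" "1 \<le> c" "c \<le> n"
  shows "modeq n z (\<lambda>x. x (t, c)) (\<lambda>x. x (Suc t, c))"
proof -
  let ?g = "\<lambda>y::pt. y (0, c)"
  have "?g \<in> Rpoly n"
    unfolding Rpoly_def using assms by (intro polys.pvar) (simp add: slots_def)
  moreover have "sact (z ! (Suc t - 1)) ?g = ?g"
    using assms(2) by (simp add: sact_def sref_def)
  moreover have "(\<lambda>x. x (t, c) - x (Suc t, c)) = (\<lambda>x. place (Suc t - 1) ?g x - place (Suc t) ?g x)"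
    by (simp add: place_def)
  ultimately show ?thesis
    unfolding modeq_def BSideal_def using assms(1)
    by (intro gen_ideal.igen CollectI exI[of _ "Suc t"] exI[of _ ?g]) simp
qed

text \<open>Tensor factor \<open>t\<close> of \<open>B\<^sub>z\<close> is preceded by the letters \<open>take t z\<close>, and
  \<open>x\<^sub>c\<close> crosses the tensor sign of every \<open>B\<^sub>i\<close> with \<open>c \<notin> {i, i + 1}\<close>.\<close>
lemma slot_var_modeq:
  assumes "t \<le> length z" "t' \<le> length z" "moving_count z t c = moving_count z t' c"
    and "1 \<le> c" "c \<le> n"
  shows "modeq n z (\<lambda>x. x (t, c)) (\<lambda>x. x (t', c))"
proof -
  have le: "modeq n z (\<lambda>x. x (t, c)) (\<lambda>x. x (t', c))"
    if "t \<le> t'" "t' \<le> length z" "moving_count z t c = moving_count z t' c" for t t'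
    using that
  proof (induction t' rule: dec_induct)
    case base
    show ?case by (rule modeq_refl)
  next
    case (step m)
    have "moving_count z t c \<le> moving_count z m c" "moving_count z m c \<le> moving_count z (Suc m) c"
      using step.hyps by (simp_all add: moving_count_mono)
    then have "moving_count z m c = moving_count z (Suc m) c"
      using step.prems by simp
    then have "\<not> (z ! m = c \<or> Suc (z ! m) = c)"
      using moving_count_Suc[of m z c] step.prems by auto
    then have "modeq n z (\<lambda>x. x (m, c)) (\<lambda>x. x (Suc m, c))"
      using slot_var_modeq_Suc step.prems assms(4,5) by simp
    moreover have "modeq n z (\<lambda>x. x (t, c)) (\<lambda>x. x (m, c))"
      using step \<open>moving_count z m c = moving_count z (Suc m) c\<close> by simp
    ultimately show ?case by (rule modeq_trans[rotated])
  qed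
  show ?thesis
  proof (cases "t \<le> t'")
    case True
    then show ?thesis using le assms by blast
  next
    case False
    then show ?thesis using le[of t' t] assms by (simp add: modeq_sym)
  qed
qed

lemma reslot_modeq:
  assumes "q \<in> polys V"
    and "\<And>v. v \<in> V \<Longrightarrow> \<tau> v \<le> length z \<and> \<tau>' v \<le> length z \<and> 1 \<le> snd v \<and> snd v \<le> n \<and>
           moving_count z (\<tau> v) (snd v) = moving_count z (\<tau>' v) (snd v)"
  shows "modeq n z (\<lambda>x. q (reslot \<tau> x)) (\<lambda>x. q (reslot \<tau>' x))"
  using assms
proof (induction rule: polys.induct)
  case (pconst c)
  show ?case by (rule modeq_refl)
next
  case (pvar v)
  then show ?case using slot_var_modeq[of "\<tau> v" z "\<tau>' v" "snd v" n] by (simp add: reslot_def)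
next
  case (padd p q)
  then show ?case by (simp add: modeq_add)
next
  case (pmul p q)
  have "(\<lambda>x. r (reslot \<sigma> x)) \<in> polys (slots n (length z))"
    if "r \<in> polys V" "\<sigma> = \<tau> \<or> \<sigma> = \<tau>'" for r \<sigma>
    using that pmul.prems by (intro polys_reslot[of r V]) (auto simp: slots_def)
  then show ?case using pmul by (intro modeq_mult) auto
qed

definition count_preserving :: "nat \<Rightarrow> word \<Rightarrow> word \<Rightarrow> (nat \<times> nat \<Rightarrow> nat) \<Rightarrow> bool" where
  "count_preserving n u v \<tau> \<longleftrightarrow> (\<forall>s c. s \<le> length u \<and> 1 \<le> c \<and> c \<le> n \<longrightarrow>
      \<tau> (s, c) \<le> length v \<and> moving_count v (\<tau> (s, c)) c = moving_count u s c)"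

text \<open>Up to the relations of \<open>B\<^sub>v\<close>, a substitution morphism moves every variable to a
  tensor factor preceded by as many letters acting on it as before; composites of distant
  moves are of this form, and such a morphism is unique (\<open>subst_mor_agree\<close>).\<close>
definition subst_mor :: "nat \<Rightarrow> word \<Rightarrow> word \<Rightarrow> (pf \<Rightarrow> pf) \<Rightarrow> bool" where
  "subst_mor n u v G \<longleftrightarrow> (\<forall>q\<in>Apoly n (length u). G q \<in> Apoly n (length v)) \<and>
     (\<forall>p\<in>Apoly n (length u). \<forall>q\<in>Apoly n (length u). modeq n u p q \<longrightarrow> modeq n v (G p) (G q)) \<and>
     (\<forall>q\<in>Apoly n (length u). \<exists>\<tau>. count_preserving n u v \<tau> \<and> modeq n v (G q) (\<lambda>x. q (reslot \<tau> x)))"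

lemma subst_mor_Apoly: "subst_mor n u v G \<Longrightarrow> q \<in> Apoly n (length u) \<Longrightarrow> G q \<in> Apoly n (length v)"
  unfolding subst_mor_def by blast

lemma subst_mor_modeq:
  "subst_mor n u v G \<Longrightarrow> p \<in> Apoly n (length u) \<Longrightarrow> q \<in> Apoly n (length u) \<Longrightarrow>
     modeq n u p q \<Longrightarrow> modeq n v (G p) (G q)"
  unfolding subst_mor_def by blast

lemma subst_mor_reslot:
  assumes "subst_mor n u v G" "q \<in> Apoly n (length u)"
  obtains \<tau> where "count_preserving n u v \<tau>" "modeq n v (G q) (\<lambda>x. q (reslot \<tau> x))"
  using assms unfolding subst_mor_def by blast

lemma reslot_fst [simp]: "reslot fst x = x"
  by (simp add: reslot_def)

lemma reslot_reslot: "reslot \<tau> (reslot \<sigma> x) = reslot (\<lambda>v. \<sigma> (\<tau> v, snd v)) x"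
  by (simp add: reslot_def)

lemma Apoly_reslot:
  "count_preserving n u v \<tau> \<Longrightarrow> q \<in> Apoly n (length u) \<Longrightarrow> (\<lambda>x. q (reslot \<tau> x)) \<in> Apoly n (length v)"
  unfolding Apoly_def by (erule polys_reslot) (auto simp: count_preserving_def slots_def)

lemma subst_mor_id: "subst_mor n u u id"
  unfolding subst_mor_def count_preserving_def
  by (auto intro!: exI[of _ fst] simp: modeq_refl)

lemma subst_mor_comp:
  assumes F: "subst_mor n u v F" and G: "subst_mor n v w G"
  shows "subst_mor n u w (G \<circ> F)"
  unfolding subst_mor_def
proof (intro conjI ballI impI)
  fix q assume q: "q \<in> Apoly n (length u)"
  then show "(G \<circ> F) q \<in> Apoly n (length w)"
    using F G by (simp add: subst_mor_Apoly)
  obtain \<tau> where \<tau>: "count_preserving n u v \<tau>" "modeq n v (F q) (\<lambda>x. q (reslot \<tau> x))"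
    using F q by (rule subst_mor_reslot)
  have q\<tau>: "(\<lambda>x. q (reslot \<tau> x)) \<in> Apoly n (length v)"
    using \<tau>(1) q by (rule Apoly_reslot)
  obtain \<sigma> where \<sigma>: "count_preserving n v w \<sigma>"
    "modeq n w (G (\<lambda>x. q (reslot \<tau> x))) (\<lambda>x. q (reslot \<tau> (reslot \<sigma> x)))"
    using G q\<tau> by (rule subst_mor_reslot)
  have "modeq n w (G (F q)) (G (\<lambda>x. q (reslot \<tau> x)))"
    using G F q q\<tau> \<tau>(2) by (simp add: subst_mor_Apoly subst_mor_modeq)
  then have "modeq n w ((G \<circ> F) q) (\<lambda>x. q (reslot (\<lambda>v. \<sigma> (\<tau> v, snd v)) x))"
    using \<sigma>(2) by (simp add: modeq_trans reslot_reslot)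
  moreover have "count_preserving n u w (\<lambda>v. \<sigma> (\<tau> v, snd v))"
    using \<tau>(1) \<sigma>(1) unfolding count_preserving_def by simp
  ultimately show "\<exists>\<tau>. count_preserving n u w \<tau> \<and> modeq n w ((G \<circ> F) q) (\<lambda>x. q (reslot \<tau> x))"
    by blast
next
  fix p q assume "p \<in> Apoly n (length u)" "q \<in> Apoly n (length u)" "modeq n u p q"
  then show "modeq n w ((G \<circ> F) p) ((G \<circ> F) q)"
    using F G by (simp add: subst_mor_Apoly subst_mor_modeq)
qed

lemma subst_mor_agree:
  assumes G: "subst_mor n u v G" and G': "subst_mor n u v G'"
    and q: "q \<in> Apoly n (length u)" and q': "q' \<in> Apoly n (length u)" and "modeq n u q q'"
  shows "modeq n v (G q) (G' q')"
proof -
  obtain \<tau> where \<tau>: "count_preserving n u v \<tau>" "modeq n v (G q') (\<lambda>x. q' (reslot \<tau> x))"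
    using G q' by (rule subst_mor_reslot)
  obtain \<tau>' where \<tau>': "count_preserving n u v \<tau>'" "modeq n v (G' q') (\<lambda>x. q' (reslot \<tau>' x))"
    using G' q' by (rule subst_mor_reslot)
  have "modeq n v (\<lambda>x. q' (reslot \<tau> x)) (\<lambda>x. q' (reslot \<tau>' x))"
    using \<tau>(1) \<tau>'(1) q' unfolding Apoly_def
    by (intro reslot_modeq[of q']) (auto simp: count_preserving_def slots_def)
  moreover have "modeq n v (G q) (G q')"
    using G q q' \<open>modeq n u q q'\<close> by (rule subst_mor_modeq)
  ultimately show ?thesis
    using \<tau>(2) \<tau>'(2) by (meson modeq_sym modeq_trans)
qed

section \<open>Edge morphisms\<close>

lemma shiftp_eq_reslot: "shiftp l p = (\<lambda>x. p (reslot (\<lambda>v. fst v + l) x))"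
  by (simp add: shiftp_def reslot_def case_prod_beta')

lemma shiftp_const [simp]: "shiftp l (\<lambda>_. c) = (\<lambda>_. c)"
  by (simp add: shiftp_def)

lemma BSideal_shiftp:
  assumes "p \<in> BSideal n z"
  shows "shiftp (length a) p \<in> BSideal n (a @ z @ b)"
  using assms unfolding BSideal_def
proof (induction rule: gen_ideal.induct)
  case (igen g0)
  then obtain j g where g0: "g0 = (\<lambda>x. place (j - 1) g x - place j g x)"
    and j: "1 \<le> j" "j \<le> length z" and g: "g \<in> Rpoly n" "sact (z ! (j - 1)) g = g"
    by blast
  have "shiftp (length a) g0 = (\<lambda>x. place (length a + j - 1) g x - place (length a + j) g x)"
    using j(1) by (simp add: g0 shiftp_def place_def case_prod_beta' add.commute)
  moreover have "(a @ z @ b) ! (length a + j - 1) = z ! (j - 1)"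
  proof -
    have "length a + j - 1 = length a + (j - 1)" "j - 1 < length z"
      using j by auto
    then show ?thesis by (simp add: nth_append)
  qed
  ultimately show ?case
    using j g by (intro gen_ideal.igen CollectI exI[of _ "length a + j"] exI[of _ g]) simp
next
  case izero
  then show ?case by (simp add: shiftp_def gen_ideal.izero)
next
  case (iadd p q)
  then show ?case using gen_ideal.iadd by (fastforce simp: shiftp_def)
next
  case (imul r p)
  have "shiftp (length a) r \<in> polys (slots n (length (a @ z @ b)))"
    unfolding shiftp_eq_reslot using imul.hyps(1) by (rule polys_reslot) (auto simp: slots_def)
  then show ?case using gen_ideal.imul[OF _ imul.IH] by (simp add: shiftp_def)
qed

lemma modeq_shiftp:
  "modeq n z p q \<Longrightarrow> modeq n (a @ z @ b) (shiftp (length a) p) (shiftp (length a) q)"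
  unfolding modeq_def by (drule BSideal_shiftp) (simp add: shiftp_def)

lemma edge_mor_one:
  assumes "edge_mor n u v F"
  shows "modeq n v (F (\<lambda>_. 1)) (\<lambda>_. 1)"
proof -
  obtain a b i j f where v: "v = a @ bword j i (mord i j) @ b" and "is_fij n i j f"
    and sh: "\<forall>p\<in>Apoly n (mord i j). modeq n v (F (shiftp (length a) p)) (shiftp (length a) (f p))"
    using assms unfolding edge_mor_def by blast
  then have "modeq n (bword j i (mord i j)) (f (\<lambda>_. 1)) (\<lambda>_. 1)"
    unfolding is_fij_def Let_def by blast
  then have "modeq n v (shiftp (length a) (f (\<lambda>_. 1))) (shiftp (length a) (\<lambda>_. 1))"
    unfolding v by (rule modeq_shiftp)
  moreover have "modeq n v (F (shiftp (length a) (\<lambda>_. 1))) (shiftp (length a) (f (\<lambda>_. 1)))"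
    using sh polys.pconst[of 1] unfolding Apoly_def by blast
  ultimately show ?thesis by (simp add: modeq_trans)
qed

lemma bimor_Apoly: "bimor n u v F \<Longrightarrow> p \<in> Apoly n (length u) \<Longrightarrow> F p \<in> Apoly n (length v)"
  unfolding bimor_def by blast

lemma bimor_modeq:
  "bimor n u v F \<Longrightarrow> p \<in> Apoly n (length u) \<Longrightarrow> q \<in> Apoly n (length u) \<Longrightarrow>
     modeq n u p q \<Longrightarrow> modeq n v (F p) (F q)"
  unfolding bimor_def by blast

lemma edge_mor_bimor: "edge_mor n u v F \<Longrightarrow> bimor n u v F"
  unfolding edge_mor_def by blast

lemma bword_2 [simp]: "bword i j 2 = [i, j]"
  by (simp add: bword_def numeral_2_eq_2)

lemma bword_3 [simp]: "bword i j 3 = [i, j, i]"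
  by (simp add: bword_def numeral_3_eq_3)

lemma mset_braid_move_2: "braid_move 2 u v \<Longrightarrow> mset u = mset v"
  by (auto simp: braid_move_def)

lemma mset_braid_move_3: "braid_move 3 u v \<Longrightarrow> mset u \<noteq> mset v"
proof
  assume "braid_move 3 u v" "mset u = mset v"
  then obtain a b i j where "i \<noteq> j" "u = a @ [i, j, i] @ b" "v = a @ [j, i, j] @ b"
    unfolding braid_move_def by auto
  then have "count (mset u) i \<noteq> count (mset v) i" by simp
  with \<open>mset u = mset v\<close> show False by simp
qed

lemma distant_edge_mset: "distant_edge n w u v \<Longrightarrow> mset u = mset v"
  unfolding distant_edge_def by (simp add: mset_braid_move_2)

lemma adjacent_edge_mset: "adjacent_edge n w u v \<Longrightarrow> mset u \<noteq> mset v"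
  unfolding adjacent_edge_def by (simp add: mset_braid_move_3)

lemma edge_mor_distant:
  assumes F: "edge_mor n u v F" and "mset u = mset v"
  obtains a b i j where "u = a @ [i, j] @ b" "v = a @ [j, i] @ b" "i + 2 \<le> j \<or> j + 2 \<le> i"
    "\<And>g. g \<in> polys {(s, c) \<in> slots n (length u). s \<noteq> Suc (length a)} \<Longrightarrow> modeq n v (F g) g"
proof -
  obtain a b i j where "i \<noteq> j"
    and u: "u = a @ bword i j (mord i j) @ b" and v: "v = a @ bword j i (mord i j) @ b"
    and lin: "\<forall>g\<in>polys {(s, c) \<in> slots n (length u). s \<le> length a \<or> length a + mord i j \<le> s}.
        \<forall>p\<in>Apoly n (length u). modeq n v (F (\<lambda>x. g x * p x)) (\<lambda>x. g x * F p x)"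
    using F unfolding edge_mor_def by blast
  have m: "mord i j = 2"
  proof (rule ccontr)
    assume "mord i j \<noteq> 2"
    then have "braid_move 3 u v"
      unfolding braid_move_def u v mord_def using \<open>i \<noteq> j\<close> by (auto split: if_splits)
    then show False using mset_braid_move_3 \<open>mset u = mset v\<close> by blast
  qed
  then have far: "i + 2 \<le> j \<or> j + 2 \<le> i"
    unfolding mord_def by (auto split: if_splits)
  have outer: "modeq n v (F g) g"
    if g: "g \<in> polys {(s, c) \<in> slots n (length u). s \<noteq> Suc (length a)}" for g
  proof -
    have g': "g \<in> polys {(s, c) \<in> slots n (length u). s \<le> length a \<or> length a + mord i j \<le> s}"
      by (rule polys_mono[OF g]) (auto simp: m)
    have one: "(\<lambda>_. 1) \<in> Apoly n (length u)"
      unfolding Apoly_def by (rule polys.pconst)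
    have "modeq n v (F (\<lambda>x. g x * 1)) (\<lambda>x. g x * F (\<lambda>_. 1) x)"
      using bspec[OF bspec[OF lin g'] one] .
    then have "modeq n v (F g) (\<lambda>x. g x * F (\<lambda>_. 1) x)"
      by simp
    moreover have "modeq n v (\<lambda>x. g x * F (\<lambda>_. 1) x) (\<lambda>x. g x * 1)"
    proof (rule modeq_mult_left[OF _ edge_mor_one[OF F]])
      show "g \<in> polys (slots n (length v))"
        by (rule polys_mono[OF g]) (auto simp: u v m slots_def)
    qed
    ultimately show ?thesis by (simp add: modeq_trans)
  qed
  show ?thesis
    using u v m by (intro that[OF _ _ far outer]) simp_all
qed

text \<open>In \<open>a @ [i, j] @ b\<close> with \<open>|i - j| \<ge> 2\<close>, the variable \<open>x\<^sub>c\<close> of the tensor factor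
  between \<open>s\<^sub>i\<close> and \<open>s\<^sub>j\<close> is fixed by \<open>s\<^sub>j\<close> if \<open>c \<in> {i, i + 1}\<close> and by \<open>s\<^sub>i\<close>
  otherwise; it is moved across that reflection.\<close>
definition cross_slot :: "nat \<Rightarrow> nat \<Rightarrow> nat \<times> nat \<Rightarrow> nat" where
  "cross_slot l i v =
     (if fst v = Suc l then if snd v = i \<or> snd v = Suc i then l + 2 else l else fst v)"

lemma moving_count_cross_slot:
  assumes "i + 2 \<le> j \<or> j + 2 \<le> i"
  shows "moving_count (a @ [i, j] @ b) (cross_slot (length a) i (s, c)) c =
    moving_count (a @ [i, j] @ b) s c"
  using assms by (auto simp: cross_slot_def moving_count_append moving_count_def)

lemma moving_count_swap:
  assumes "t \<noteq> Suc (length a)"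
  shows "moving_count (a @ [j, i] @ b) t c = moving_count (a @ [i, j] @ b) t c"
proof (cases "t \<le> length a")
  case False
  with assms have "t - length a = Suc (Suc (t - length a - 2))"
    by simp
  then show ?thesis by (simp add: moving_count_append moving_count_def)
qed (simp add: moving_count_append moving_count_def)

lemma count_preserving_cross_slot:
  assumes "i + 2 \<le> j \<or> j + 2 \<le> i"
  shows "count_preserving n (a @ [i, j] @ b) (a @ [j, i] @ b) (cross_slot (length a) i)"
  unfolding count_preserving_def
proof (intro allI impI conjI)
  fix s c
  assume "s \<le> length (a @ [i, j] @ b) \<and> 1 \<le> c \<and> c \<le> n"
  then show "cross_slot (length a) i (s, c) \<le> length (a @ [j, i] @ b)"
    by (simp add: cross_slot_def)
  have not_mid: "cross_slot (length a) i (s, c) \<noteq> Suc (length a)"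
    by (simp add: cross_slot_def)
  show "moving_count (a @ [j, i] @ b) (cross_slot (length a) i (s, c)) c =
      moving_count (a @ [i, j] @ b) s c"
    using moving_count_swap[OF not_mid] moving_count_cross_slot[OF assms] by simp
qed

lemma distant_edge_subst_mor:
  assumes d: "distant_edge n w u v" and F: "edge_mor n u v F"
  shows "subst_mor n u v F"
proof -
  from F distant_edge_mset[OF d] obtain a b i j where u: "u = a @ [i, j] @ b" and v: "v = a @ [j, i] @ b"
    and far: "i + 2 \<le> j \<or> j + 2 \<le> i"
    and outer: "\<And>g. g \<in> polys {(s, c) \<in> slots n (length u). s \<noteq> Suc (length a)} \<Longrightarrow>
                  modeq n v (F g) g"
    by (rule edge_mor_distant) blast
  let ?\<tau> = "cross_slot (length a) i"
  have bm: "bimor n u v F" using F by (rule edge_mor_bimor)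
  have "modeq n v (F q) (\<lambda>x. q (reslot ?\<tau> x))" if q: "q \<in> Apoly n (length u)" for q
  proof -
    have "moving_count u (fst v) (snd v) = moving_count u (?\<tau> v) (snd v)" for v
      using moving_count_cross_slot[OF far, of a b "fst v" "snd v"] by (simp add: u)
    moreover have "?\<tau> v \<le> length u" if "fst v \<le> length u" for v
      using that by (simp add: u cross_slot_def)
    ultimately have "modeq n u (\<lambda>x. q (reslot fst x)) (\<lambda>x. q (reslot ?\<tau> x))"
      using q unfolding Apoly_def by (intro reslot_modeq[of q]) (auto simp: slots_def)
    then have "modeq n u q (\<lambda>x. q (reslot ?\<tau> x))" by simp
    moreover have q\<tau>: "(\<lambda>x. q (reslot ?\<tau> x)) \<in> polys {(s, c) \<in> slots n (length u). s \<noteq> Suc (length a)}"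
      using q unfolding Apoly_def by (rule polys_reslot) (auto simp: u slots_def cross_slot_def)
    moreover have "(\<lambda>x. q (reslot ?\<tau> x)) \<in> Apoly n (length u)"
      unfolding Apoly_def by (rule polys_mono[OF q\<tau>]) auto
    ultimately have "modeq n v (F q) (F (\<lambda>x. q (reslot ?\<tau> x)))"
      by (intro bimor_modeq[OF bm q])
    then show ?thesis using outer[OF q\<tau>] by (rule modeq_trans)
  qed
  moreover have "count_preserving n u v ?\<tau>"
    unfolding u v using far by (rule count_preserving_cross_slot)
  ultimately show ?thesis
    unfolding subst_mor_def using bimor_Apoly[OF bm] bimor_modeq[OF bm] by blast
qed

section \<open>Paths in the rex graph\<close>

lemma rex_path_Nil [simp]: "\<not> rex_path n w []"
  by (simp add: rex_path_def)

lemma rex_path_Cons_Cons [simp]: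
  "rex_path n w (u # v # ps) \<longleftrightarrow> rex_edge n w u v \<and> rex_path n w (v # ps)"
proof
  assume p: "rex_path n w (u # v # ps)"
  have "rex_edge n w ((u # v # ps) ! 0) ((u # v # ps) ! 1)"
    using p unfolding rex_path_def by fastforce
  moreover have "rex_edge n w ((v # ps) ! k) ((v # ps) ! Suc k)" if "Suc k < length (v # ps)" for k
    using p that unfolding rex_path_def by (metis Suc_less_eq length_Cons nth_Cons_Suc)
  ultimately show "rex_edge n w u v \<and> rex_path n w (v # ps)"
    using p unfolding rex_path_def by auto
next
  assume "rex_edge n w u v \<and> rex_path n w (v # ps)"
  moreover have "u \<in> Rex n w" if "rex_edge n w u v"
    using that unfolding rex_edge_def adjacent_edge_def distant_edge_def by blast
  ultimately show "rex_path n w (u # v # ps)"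
    unfolding rex_path_def by (auto simp: less_Suc_eq_0_disj)
qed

definition adjacent_steps :: "nat \<Rightarrow> (nat \<Rightarrow> nat) \<Rightarrow> word list \<Rightarrow> word set list" where
  "adjacent_steps n w ps =
     map (\<lambda>(a, b). {a, b}) (filter (\<lambda>(a, b). adjacent_edge n w a b) (zip ps (tl ps)))"

lemma adjacent_steps_single [simp]: "adjacent_steps n w [u] = []"
  by (simp add: adjacent_steps_def)

lemma adjacent_steps_Cons_Cons [simp]:
  "adjacent_steps n w (u # v # ps) =
     (if adjacent_edge n w u v then [{u, v}] else []) @ adjacent_steps n w (v # ps)"
  by (simp add: adjacent_steps_def)

text \<open>The multiset of letters, invariant under distant moves and changed by adjacent ones,
  determines the direction in which the common adjacent edge is crossed.\<close>
lemma adjacent_start_cases: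
  assumes "ps \<noteq> []" "ps' \<noteq> []" "last ps = last ps'"
    and "adjacent_steps n w ps = adjacent_steps n w ps'" "mset (hd ps) = mset (hd ps')"
    and "\<And>u v r. ps = u # v # r \<Longrightarrow> adjacent_edge n w u v"
    and "\<And>u v r. ps' = u # v # r \<Longrightarrow> adjacent_edge n w u v"
  obtains (single) u where "ps = [u]" "ps' = [u]"
  | (step) u v r r' where "ps = u # v # r" "ps' = u # v # r'" "adjacent_edge n w u v"
      "adjacent_steps n w (v # r) = adjacent_steps n w (v # r')"
proof (cases ps rule: remdups_adj.cases)
  case 1
  with assms(1) show ?thesis by simp
next
  case (2 u)
  then have "ps' = [u]"
    using assms(2-4,7) by (cases ps' rule: remdups_adj.cases) auto
  with 2 show ?thesis by (rule single)
next
  case (3 u v r)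
  then have uv: "adjacent_edge n w u v"
    using assms(6) by blast
  obtain u' v' r' where ps': "ps' = u' # v' # r'"
    using assms(2,4,7) 3 uv by (cases ps' rule: remdups_adj.cases) auto
  then have "adjacent_edge n w u' v'"
    using assms(7) by blast
  then have "{u, v} = {u', v'}" and steps: "adjacent_steps n w (v # r) = adjacent_steps n w (v' # r')"
    using assms(4) 3 ps' uv by simp_all
  moreover have "mset u = mset u'"
    using assms(5) 3 ps' by simp
  ultimately have "u' = u" "v' = v"
    using adjacent_edge_mset[OF uv] by (auto simp: doubleton_eq_iff)
  then show ?thesis
    using 3 ps' uv steps by (intro step[of u v r r']) simp_all
qed

text \<open>The canonical identification of the bimodules of a cloud, given by the substitution
  morphisms between them.\<close>
definition canon_related :: "nat \<Rightarrow> word \<Rightarrow> word \<Rightarrow> pf \<Rightarrow> pf \<Rightarrow> bool" where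
  "canon_related n u u' a a' \<longleftrightarrow> (\<exists>x G G' q q'. subst_mor n x u G \<and> subst_mor n x u' G' \<and>
     q \<in> Apoly n (length x) \<and> q' \<in> Apoly n (length x) \<and> modeq n x q q' \<and> a = G q \<and> a' = G' q')"

lemma canon_related_sym: "canon_related n u u' a a' \<Longrightarrow> canon_related n u' u a' a"
  unfolding canon_related_def using modeq_sym by blast

lemma canon_related_of_modeq:
  "a \<in> Apoly n (length u) \<Longrightarrow> a' \<in> Apoly n (length u) \<Longrightarrow> modeq n u a a' \<Longrightarrow>
     canon_related n u u a a'"
  unfolding canon_related_def using subst_mor_id by (metis id_apply)

lemma canon_related_modeq:
  assumes "canon_related n u u a a'"
  shows "a \<in> Apoly n (length u)" "a' \<in> Apoly n (length u)" "modeq n u a a'"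
proof -
  obtain x G G' q q' where "subst_mor n x u G" "subst_mor n x u G'" "modeq n x q q'"
    and q: "q \<in> Apoly n (length x)" "q' \<in> Apoly n (length x)" and "a = G q" "a' = G' q'"
    using assms unfolding canon_related_def by blast
  then show "a \<in> Apoly n (length u)" "a' \<in> Apoly n (length u)" "modeq n u a a'"
    by (simp_all add: subst_mor_Apoly subst_mor_agree)
qed

context
  fixes n :: nat and w :: "nat \<Rightarrow> nat" and Fm :: "word \<Rightarrow> word \<Rightarrow> pf \<Rightarrow> pf"
  assumes edge_mor_Fm: "\<And>u v. rex_edge n w u v \<Longrightarrow> edge_mor n u v (Fm u v)"
begin

lemma canon_related_distant_step:
  assumes "distant_edge n w u v" and "canon_related n u' u a' a"
  shows "canon_related n u' v a' (Fm u v a)"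
proof -
  have "subst_mor n u v (Fm u v)"
    using assms(1) by (simp add: rex_edge_def edge_mor_Fm distant_edge_subst_mor)
  moreover obtain x G G' q q' where "subst_mor n x u' G" "subst_mor n x u G'"
    "q \<in> Apoly n (length x)" "q' \<in> Apoly n (length x)" "modeq n x q q'" "a' = G q" "a = G' q'"
    using assms(2) unfolding canon_related_def by blast
  ultimately show ?thesis
    unfolding canon_related_def by (metis comp_apply subst_mor_comp)
qed

lemma canon_related_adjacent_step:
  assumes "adjacent_edge n w u v" and "canon_related n u u a a'"
  shows "canon_related n v v (Fm u v a) (Fm u v a')"
proof -
  have "bimor n u v (Fm u v)"
    using assms(1) by (simp add: rex_edge_def edge_mor_Fm edge_mor_bimor)
  with canon_related_modeq[OF assms(2)] show ?thesis
    by (simp add: canon_related_of_modeq bimor_Apoly bimor_modeq)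
qed

lemma strip_distant_prefix:
  assumes "rex_path n w ps" and "canon_related n u' (hd ps) a' a"
  obtains ps0 a0 where "rex_path n w ps0" "length ps0 \<le> length ps" "last ps0 = last ps"
    "adjacent_steps n w ps0 = adjacent_steps n w ps" "mset (hd ps0) = mset (hd ps)"
    "canon_related n u' (hd ps0) a' a0" "path_mor Fm ps0 a0 = path_mor Fm ps a"
    "\<And>u v r. ps0 = u # v # r \<Longrightarrow> adjacent_edge n w u v"
  using assms
proof (induction ps arbitrary: a thesis)
  case Nil
  then show ?case by simp
next
  case (Cons u r)
  show ?case
  proof (cases "\<exists>v r'. r = v # r' \<and> distant_edge n w u v")
    case True
    then obtain v r' where r: "r = v # r'" and d: "distant_edge n w u v" by blast
    have "canon_related n u' (hd r) a' (Fm u v a)"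
      using Cons.prems(3) d r by (simp add: canon_related_distant_step)
    moreover have "rex_path n w r"
      using Cons.prems(2) r by simp
    ultimately obtain ps0 a0 where ps0: "rex_path n w ps0" "length ps0 \<le> length r"
      "last ps0 = last r" "adjacent_steps n w ps0 = adjacent_steps n w r" "mset (hd ps0) = mset (hd r)"
      "canon_related n u' (hd ps0) a' a0" "path_mor Fm ps0 a0 = path_mor Fm r (Fm u v a)"
      "\<And>u v r. ps0 = u # v # r \<Longrightarrow> adjacent_edge n w u v"
      using Cons.IH by blast
    have "\<not> adjacent_edge n w u v" "mset u = mset v"
      using d distant_edge_mset adjacent_edge_mset by blast+
    then show ?thesis
      using ps0 r by (intro Cons.prems(1)[of ps0 a0]) auto
  next
    case False
    have "adjacent_edge n w u v" if "u # r = u # v # r'" for v r'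
      using False Cons.prems(2) that by (auto simp: rex_edge_def)
    then show ?thesis
      using Cons.prems by (intro Cons.prems(1)[of "u # r" a]) auto
  qed
qed

lemma path_mor_agree:
  assumes "rex_path n w ps" "rex_path n w ps'" "last ps = last ps'"
    and "adjacent_steps n w ps = adjacent_steps n w ps'" "mset (hd ps) = mset (hd ps')"
    and "canon_related n (hd ps) (hd ps') a a'"
  shows "modeq n (last ps) (path_mor Fm ps a) (path_mor Fm ps' a')"
  using assms
proof (induction "length ps" arbitrary: ps ps' a a' rule: less_induct)
  case less
  obtain ps0 a0 where ps0: "rex_path n w ps0" "length ps0 \<le> length ps" "last ps0 = last ps"
    "adjacent_steps n w ps0 = adjacent_steps n w ps" "mset (hd ps0) = mset (hd ps)"
    "canon_related n (hd ps') (hd ps0) a' a0" "path_mor Fm ps0 a0 = path_mor Fm ps a"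
    "\<And>u v r. ps0 = u # v # r \<Longrightarrow> adjacent_edge n w u v"
    by (rule strip_distant_prefix[OF less.prems(1) canon_related_sym[OF less.prems(6)]]) blast
  obtain ps0' a0' where ps0': "rex_path n w ps0'" "last ps0' = last ps'"
    "adjacent_steps n w ps0' = adjacent_steps n w ps'" "mset (hd ps0') = mset (hd ps')"
    "canon_related n (hd ps0) (hd ps0') a0 a0'" "path_mor Fm ps0' a0' = path_mor Fm ps' a'"
    "\<And>u v r. ps0' = u # v # r \<Longrightarrow> adjacent_edge n w u v"
    by (rule strip_distant_prefix[OF less.prems(2) canon_related_sym[OF ps0(6)]]) blast
  have "ps0 \<noteq> []" "ps0' \<noteq> []" "last ps0 = last ps0'"
    "adjacent_steps n w ps0 = adjacent_steps n w ps0'" "mset (hd ps0) = mset (hd ps0')"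
    using ps0(1,3-5) ps0'(1-4) less.prems(3-5) by auto
  then consider (single) u where "ps0 = [u]" "ps0' = [u]"
    | (step) u v r r' where "ps0 = u # v # r" "ps0' = u # v # r'" "adjacent_edge n w u v"
        "adjacent_steps n w (v # r) = adjacent_steps n w (v # r')"
    using adjacent_start_cases[of ps0 ps0' n w] ps0(8) ps0'(7) by metis
  then have "modeq n (last ps0) (path_mor Fm ps0 a0) (path_mor Fm ps0' a0')"
  proof cases
    case (single u)
    then show ?thesis using canon_related_modeq(3) ps0'(5) by simp
  next
    case (step u v r r')
    have "canon_related n v v (Fm u v a0) (Fm u v a0')"
      using canon_related_adjacent_step step(1-3) ps0'(5) by simp
    moreover have "length (v # r) < length ps" "rex_path n w (v # r)" "rex_path n w (v # r')"
      "last (v # r) = last (v # r')"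
      using ps0(1-3) ps0'(1,2) less.prems(3) step(1,2) by auto
    ultimately show ?thesis
      using less.hyps[of "v # r" "v # r'"] step by simp
  qed
  then show ?case
    using ps0(3,7) ps0'(6) by simp
qed

end

theorem proposition3p2:
  fixes n :: nat and w :: "nat \<Rightarrow> nat"
    and E :: "word set \<Rightarrow> word set \<Rightarrow> word set"
    and Cs :: "word set list" and p p' :: "word list"
    and Fm :: "word \<Rightarrow> word \<Rightarrow> (pf \<Rightarrow> pf)"
  assumes "n \<ge> 2"
    and "w permutes {1..n}"
    and "rep_edges n w E"
    and "gamma_path n w Cs"
    and "\<And>u v. rex_edge n w u v \<Longrightarrow> edge_mor n u v (Fm u v)"
    and "lift n w E Cs p"
    and "lift n w E Cs p'"
  shows "\<forall>q\<in>Apoly n (length (rep (hd Cs))).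
           modeq n (rep (last Cs)) (path_mor Fm p q) (path_mor Fm p' q)"
proof
  fix q assume q: "q \<in> Apoly n (length (rep (hd Cs)))"
  have ends: "hd p = rep (hd Cs)" "hd p' = rep (hd Cs)" "last p = rep (last Cs)" "last p' = rep (last Cs)"
    and paths: "rex_path n w p" "rex_path n w p'"
    and steps: "adjacent_steps n w p = adjacent_steps n w p'"
    using assms(6,7) unfolding lift_def adjacent_steps_def by auto
  have "canon_related n (hd p) (hd p') q q"
    using q ends by (simp add: canon_related_of_modeq modeq_refl)
  then have "modeq n (last p) (path_mor Fm p q) (path_mor Fm p' q)"
    using path_mor_agree[OF assms(5) paths] ends steps by simp
  then show "modeq n (rep (last Cs)) (path_mor Fm p q) (path_mor Fm p' q)"
    using ends by simp
qed

end
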